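(* Let $\succcurlyeq$ be a preference relation on the set $\mathcal{B}$ of bets over a propositional language $\mathcal{L}$. The following are equivalent: (1) $\succcurlyeq$ satisfies Non-Triviality, Objective Expected Utility and Implication; (2) $\succcurlyeq$ is represented by a subjective model of uncertainty $(\Omega,t,\lambda)$ with $\lambda$ additive and $t$ monotone; (3) $\succcurlyeq$ is represented by a subjective model of uncertainty $(\Omega',t',\lambda')$ with $\lambda'$ monotone and $t'$ sound.
   Context: Let $\mathbb{P}$ be a set of propositional variables containing distinguished $\mathbf{T}$, $\mathbf{F}$, and $\mathcal{L}$ the language generated by $\neg,\land,\lor$. Write $\phi\implies\psi$ if $\psi$ is deducible from $\phi$ in classical propositional logic, and $\phi\iff\psi$ for mutual deducibility. A bet is a finitely supported $b:\mathcal{L}\to[0,1]$ summing to $1$; $b_\phi$ is the point-mass bet on $\phi$; the set $\mathcal{B}$ of bets is a mixture space under pointwise mixtures and $\succcurlyeq$ is a relation on it. A truth valuation on $\Omega$ is $t:\mathcal{L}\to2^\Omega$ with $t(\mathbf{T})=\Omega,t(\mathbf{F})=\emptyset$; exact: $\phi\iff\psi\Rightarrow t(\phi)=t(\psi)$; monotone: $\phi\implies\psi\Rightarrow t(\phi)\subseteq t(\psi)$; symmetric: $t(\neg\phi)=\Omega\setminus t(\phi)$; $\land$-distributive: $t(\phi\land\psi)=t(\phi)\cap t(\psi)$; sound: all four. A likelihood appraisal on a field $\Sigma\subseteq 2^\Omega$ is $\lambda:\Sigma\to[0,1]$ with $\lambda(\emptyset)=0,\lambda(\Omega)=1$; monotone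 if $A\subseteq B$ implies $\lambda(A)\le\lambda(B)$; additive if finitely additive. A subjective model $(\Omega,t,\lambda)$ ($\lambda$ on a field containing $t(\mathcal{L})$) represents $\succcurlyeq$ if $b\succcurlyeq b'\iff\sum_\phi b(\phi)\lambda(t(\phi))\ge\sum_\phi b'(\phi)\lambda(t(\phi))$. Non-Triviality: $b_{\mathbf{T}}\succcurlyeq b_\phi\succcurlyeq b_{\mathbf{F}}$ for all $\phi$ and $b_{\mathbf{T}}\succ b_{\mathbf{F}}$. Objective Expected Utility: $\succcurlyeq$ is complete, transitive, Archimedean and satisfies Independence. Implication: if $\phi\implies\psi$ then $b_\psi\succcurlyeq b_\phi$. *)

theory Defs
  imports "HOL-Analysis.Analysis"
begin

datatype 'p form = Var 'p | Neg "'p form" | Conj "'p form" "'p form" | Disj "'p form" "'p form"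

fun eval :: "('p \<Rightarrow> bool) \<Rightarrow> 'p form \<Rightarrow> bool" where
  "eval v (Var p) = v p"
| "eval v (Neg a) = (\<not> eval v a)"
| "eval v (Conj a b) = (eval v a \<and> eval v b)"
| "eval v (Disj a b) = (eval v a \<or> eval v b)"

text \<open>Classical deducibility (via completeness: semantic consequence), where the distinguished
  variables Tv and Fv are the truth constants true and false.\<close>
definition entails :: "'p \<Rightarrow> 'p \<Rightarrow> 'p form \<Rightarrow> 'p form \<Rightarrow> bool" where
  "entails Tv Fv a b \<longleftrightarrow> (\<forall>v. v Tv \<and> \<not> v Fv \<longrightarrow> eval v a \<longrightarrow> eval v b)"

definition equiv_form :: "'p \<Rightarrow> 'p \<Rightarrow> 'p form \<Rightarrow> 'p form \<Rightarrow> bool" where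
  "equiv_form Tv Fv a b \<longleftrightarrow> entails Tv Fv a b \<and> entails Tv Fv b a"

definition supp :: "('p form \<Rightarrow> real) \<Rightarrow> 'p form set" where
  "supp b = {a. b a \<noteq> 0}"

definition bet :: "('p form \<Rightarrow> real) \<Rightarrow> bool" where
  "bet b \<longleftrightarrow> (\<forall>a. 0 \<le> b a \<and> b a \<le> 1) \<and> finite (supp b) \<and> (\<Sum>a\<in>supp b. b a) = 1"

definition point_bet :: "'p form \<Rightarrow> ('p form \<Rightarrow> real)" where
  "point_bet a = (\<lambda>c. if c = a then 1 else 0)"

definition mix :: "real \<Rightarrow> ('p form \<Rightarrow> real) \<Rightarrow> ('p form \<Rightarrow> real) \<Rightarrow> ('p form \<Rightarrow> real)" where
  "mix \<alpha> b b' = (\<lambda>a. \<alpha> * b a + (1 - \<alpha>) * b' a)"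

type_synonym 'p pref = "('p form \<Rightarrow> real) \<Rightarrow> ('p form \<Rightarrow> real) \<Rightarrow> bool"

definition strict :: "'p pref \<Rightarrow> ('p form \<Rightarrow> real) \<Rightarrow> ('p form \<Rightarrow> real) \<Rightarrow> bool" where
  "strict R b b' \<longleftrightarrow> R b b' \<and> \<not> R b' b"

definition non_triviality :: "'p \<Rightarrow> 'p \<Rightarrow> 'p pref \<Rightarrow> bool" where
  "non_triviality Tv Fv R \<longleftrightarrow>
     (\<forall>a. R (point_bet (Var Tv)) (point_bet a) \<and> R (point_bet a) (point_bet (Var Fv)))
     \<and> strict R (point_bet (Var Tv)) (point_bet (Var Fv))"

definition complete_pref :: "'p pref \<Rightarrow> bool" where
  "complete_pref R \<longleftrightarrow> (\<forall>b b'. bet b \<longrightarrow> bet b' \<longrightarrow> R b b' \<or> R b' b)"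

definition transitive_pref :: "'p pref \<Rightarrow> bool" where
  "transitive_pref R \<longleftrightarrow> (\<forall>b b' b''. bet b \<longrightarrow> bet b' \<longrightarrow> bet b'' \<longrightarrow>
      R b b' \<longrightarrow> R b' b'' \<longrightarrow> R b b'')"

definition archimedean_pref :: "'p pref \<Rightarrow> bool" where
  "archimedean_pref R \<longleftrightarrow> (\<forall>b b' b''. bet b \<longrightarrow> bet b' \<longrightarrow> bet b'' \<longrightarrow>
      strict R b b' \<longrightarrow> strict R b' b'' \<longrightarrow>
      (\<exists>\<alpha> \<beta>. 0 < \<alpha> \<and> \<alpha> < 1 \<and> 0 < \<beta> \<and> \<beta> < 1 \<and>
         strict R (mix \<alpha> b b'') b' \<and> strict R b' (mix \<beta> b b'')))"

definition independence_pref :: "'p pref \<Rightarrow> bool" where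
  "independence_pref R \<longleftrightarrow> (\<forall>b b' b'' \<alpha>. bet b \<longrightarrow> bet b' \<longrightarrow> bet b'' \<longrightarrow>
      0 < \<alpha> \<longrightarrow> \<alpha> < 1 \<longrightarrow> (R b b' \<longleftrightarrow> R (mix \<alpha> b b'') (mix \<alpha> b' b'')))"

definition objective_EU :: "'p pref \<Rightarrow> bool" where
  "objective_EU R \<longleftrightarrow> complete_pref R \<and> transitive_pref R \<and> archimedean_pref R \<and> independence_pref R"

definition implication_axiom :: "'p \<Rightarrow> 'p \<Rightarrow> 'p pref \<Rightarrow> bool" where
  "implication_axiom Tv Fv R \<longleftrightarrow> (\<forall>a c. entails Tv Fv a c \<longrightarrow> R (point_bet c) (point_bet a))"

definition truth_valuation :: "'p \<Rightarrow> 'p \<Rightarrow> 'w set \<Rightarrow> ('p form \<Rightarrow> 'w set) \<Rightarrow> bool" where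
  "truth_valuation Tv Fv \<Omega> t \<longleftrightarrow> (\<forall>a. t a \<subseteq> \<Omega>) \<and> t (Var Tv) = \<Omega> \<and> t (Var Fv) = {}"

definition exact_tv :: "'p \<Rightarrow> 'p \<Rightarrow> ('p form \<Rightarrow> 'w set) \<Rightarrow> bool" where
  "exact_tv Tv Fv t \<longleftrightarrow> (\<forall>a c. equiv_form Tv Fv a c \<longrightarrow> t a = t c)"

definition monotone_tv :: "'p \<Rightarrow> 'p \<Rightarrow> ('p form \<Rightarrow> 'w set) \<Rightarrow> bool" where
  "monotone_tv Tv Fv t \<longleftrightarrow> (\<forall>a c. entails Tv Fv a c \<longrightarrow> t a \<subseteq> t c)"

definition symmetric_tv :: "'w set \<Rightarrow> ('p form \<Rightarrow> 'w set) \<Rightarrow> bool" where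
  "symmetric_tv \<Omega> t \<longleftrightarrow> (\<forall>a. t (Neg a) = \<Omega> - t a)"

definition conj_distributive_tv :: "('p form \<Rightarrow> 'w set) \<Rightarrow> bool" where
  "conj_distributive_tv t \<longleftrightarrow> (\<forall>a c. t (Conj a c) = t a \<inter> t c)"

definition sound_tv :: "'p \<Rightarrow> 'p \<Rightarrow> 'w set \<Rightarrow> ('p form \<Rightarrow> 'w set) \<Rightarrow> bool" where
  "sound_tv Tv Fv \<Omega> t \<longleftrightarrow> exact_tv Tv Fv t \<and> monotone_tv Tv Fv t \<and> symmetric_tv \<Omega> t \<and> conj_distributive_tv t"

definition likelihood_appraisal :: "'w set \<Rightarrow> 'w set set \<Rightarrow> ('w set \<Rightarrow> real) \<Rightarrow> bool" where
  "likelihood_appraisal \<Omega> \<Sigma> lam \<longleftrightarrow> algebra \<Omega> \<Sigma> \<and> (\<forall>A\<in>\<Sigma>. 0 \<le> lam A \<and> lam A \<le> 1)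
     \<and> lam {} = 0 \<and> lam \<Omega> = 1"

definition monotone_la :: "'w set set \<Rightarrow> ('w set \<Rightarrow> real) \<Rightarrow> bool" where
  "monotone_la \<Sigma> lam \<longleftrightarrow> (\<forall>A\<in>\<Sigma>. \<forall>B\<in>\<Sigma>. A \<subseteq> B \<longrightarrow> lam A \<le> lam B)"

definition additive_la :: "'w set set \<Rightarrow> ('w set \<Rightarrow> real) \<Rightarrow> bool" where
  "additive_la \<Sigma> lam \<longleftrightarrow> (\<forall>A\<in>\<Sigma>. \<forall>B\<in>\<Sigma>. A \<inter> B = {} \<longrightarrow> lam (A \<union> B) = lam A + lam B)"

definition subjective_model ::
  "'p \<Rightarrow> 'p \<Rightarrow> 'w set \<Rightarrow> ('p form \<Rightarrow> 'w set) \<Rightarrow> 'w set set \<Rightarrow> ('w set \<Rightarrow> real) \<Rightarrow> bool" where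
  "subjective_model Tv Fv \<Omega> t \<Sigma> lam \<longleftrightarrow>
     truth_valuation Tv Fv \<Omega> t \<and> likelihood_appraisal \<Omega> \<Sigma> lam \<and> range t \<subseteq> \<Sigma>"

definition expected :: "('p form \<Rightarrow> real) \<Rightarrow> ('p form \<Rightarrow> real) \<Rightarrow> real" where
  "expected u b = (\<Sum>a\<in>supp b. b a * u a)"

definition represents :: "'p pref \<Rightarrow> ('p form \<Rightarrow> 'w set) \<Rightarrow> ('w set \<Rightarrow> real) \<Rightarrow> bool" where
  "represents R t lam \<longleftrightarrow> (\<forall>b b'. bet b \<longrightarrow> bet b' \<longrightarrow>
      (R b b' \<longleftrightarrow> expected (\<lambda>a. lam (t a)) b \<ge> expected (\<lambda>a. lam (t a)) b'))"

end

(* The axioms say that the preference is a von Neumann-Morgenstern preference on the mixture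
   space of bets whose utility on point bets grows along entailment. Each point bet is
   calibrated against the lotteries alpha T + (1 - alpha) F: the calibrating weight is the
   supremum of the weights whose lotteries the bet weakly beats, and the Archimedean axiom
   rules out a strict preference either way. Independence propagates these indifferences to
   all bets, so the normalised utility u is a likelihood on formulas: u T = 1, u F = 0,
   u monotone. Any such u arises as lambda o t in two kinds of models: truth sets [0, u phi)
   in [0, 1) with Lebesgue measure (lambda additive, t monotone), and the classical valuations
   with t phi the models of phi and lambda A the supremum of u phi over t phi inside A
   (lambda monotone, t sound). Conversely every model of either kind yields such a
   likelihood. *)

theory Submission
  imports Defs
begin

section \<open>Bets as a mixture space\<close>

lemma supp_point_bet [simp]: "supp (point_bet a) = {a}"
  by (auto simp: supp_def point_bet_def)

lemma bet_point_bet: "bet (point_bet a)"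
  unfolding bet_def supp_point_bet by (simp add: point_bet_def)

lemma expected_point_bet [simp]: "expected u (point_bet a) = u a"
  unfolding expected_def supp_point_bet by (simp add: point_bet_def)

lemma sum_supp_superset:
  assumes "finite S" "supp b \<subseteq> S"
  shows "(\<Sum>a\<in>supp b. f a * b a) = (\<Sum>a\<in>S. f a * b a)"
  by (rule sum.mono_neutral_left) (use assms in \<open>auto simp: supp_def\<close>)

lemma bet_sum_superset:
  assumes "bet b" "finite S" "supp b \<subseteq> S"
  shows "(\<Sum>a\<in>S. b a) = 1"
  using sum_supp_superset[OF assms(2,3), of "\<lambda>_. 1"] assms(1) by (simp add: bet_def)

lemma expected_superset:
  assumes "finite S" "supp b \<subseteq> S"
  shows "expected u b = (\<Sum>a\<in>S. b a * u a)"
  using sum_supp_superset[OF assms, of u] by (simp add: expected_def mult.commute)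

lemma supp_mix_subset: "supp (mix \<alpha> x y) \<subseteq> supp x \<union> supp y"
  by (auto simp: supp_def mix_def)

lemma bet_mix:
  assumes x: "bet x" and y: "bet y" and "0 \<le> \<alpha>" "\<alpha> \<le> 1"
  shows "bet (mix \<alpha> x y)"
proof -
  let ?S = "supp x \<union> supp y"
  have fin: "finite ?S" using x y by (simp add: bet_def)
  have "(\<Sum>a\<in>supp (mix \<alpha> x y). mix \<alpha> x y a) = (\<Sum>a\<in>?S. mix \<alpha> x y a)"
    using sum_supp_superset[OF fin supp_mix_subset, of "\<lambda>_. 1"] by simp
  also have "\<dots> = \<alpha> * (\<Sum>a\<in>?S. x a) + (1 - \<alpha>) * (\<Sum>a\<in>?S. y a)"
    by (simp add: mix_def sum.distrib sum_distrib_left)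
  also have "\<dots> = 1"
    using bet_sum_superset[OF x fin] bet_sum_superset[OF y fin] by simp
  finally have "(\<Sum>a\<in>supp (mix \<alpha> x y). mix \<alpha> x y a) = 1" .
  moreover have "0 \<le> mix \<alpha> x y a \<and> mix \<alpha> x y a \<le> 1" for a
    using x y assms(3,4) unfolding bet_def mix_def by (auto intro: convex_bound_le)
  ultimately show ?thesis
    using finite_subset[OF supp_mix_subset fin] by (simp add: bet_def)
qed

lemma expected_mix:
  assumes "bet x" "bet y"
  shows "expected u (mix \<alpha> x y) = \<alpha> * expected u x + (1 - \<alpha>) * expected u y"
proof -
  let ?S = "supp x \<union> supp y"
  have fin: "finite ?S" using assms by (simp add: bet_def)
  have "expected u (mix \<alpha> x y) = (\<Sum>a\<in>?S. mix \<alpha> x y a * u a)"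
    using expected_superset[OF fin supp_mix_subset] .
  also have "\<dots> = \<alpha> * (\<Sum>a\<in>?S. x a * u a) + (1 - \<alpha>) * (\<Sum>a\<in>?S. y a * u a)"
    by (simp add: mix_def sum_distrib_left sum.distrib[symmetric] algebra_simps)
  also have "\<dots> = \<alpha> * expected u x + (1 - \<alpha>) * expected u y"
    by (simp add: expected_superset[OF fin Un_upper1] expected_superset[OF fin Un_upper2])
  finally show ?thesis .
qed

lemma mix_same [simp]: "mix \<alpha> x x = x"
  by (simp add: mix_def fun_eq_iff algebra_simps)

lemma mix_commute: "mix \<alpha> x y = mix (1 - \<alpha>) y x"
  by (simp add: mix_def fun_eq_iff algebra_simps)

lemma mix_one [simp]: "mix 1 x y = x"
  by (simp add: mix_def)

lemma mix_zero [simp]: "mix 0 x y = y"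
  by (simp add: mix_def)

lemma mix_mix: "mix p (mix \<alpha> x y) (mix \<beta> x y) = mix (p * \<alpha> + (1 - p) * \<beta>) x y"
  by (simp add: mix_def fun_eq_iff algebra_simps)

lemma bet_eq_point_bet:
  assumes b: "bet b" and "b a = 1"
  shows "b = point_bet a"
proof -
  have fin: "finite (supp b)" and a: "a \<in> supp b" using assms by (auto simp: bet_def supp_def)
  have "1 = b a + (\<Sum>c\<in>supp b - {a}. b c)"
    using b fin a by (simp add: bet_def sum.remove)
  then have "\<forall>c\<in>supp b - {a}. b c = 0"
    using assms fin b by (subst sum_nonneg_eq_0_iff[symmetric]) (auto simp: bet_def)
  then show ?thesis
    using assms by (auto simp: fun_eq_iff point_bet_def supp_def)
qed

lemma bet_decompose:
  assumes b: "bet b" and a: "a \<in> supp b" and "b a < 1"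
  obtains b' where "bet b'" "supp b' = supp b - {a}" "b = mix (b a) (point_bet a) b'"
proof
  define b' where "b' c = (if c = a then 0 else b c / (1 - b a))" for c
  have fin: "finite (supp b)" and rng: "\<And>c. 0 \<le> b c \<and> b c \<le> 1"
    using b by (auto simp: bet_def)
  show supp': "supp b' = supp b - {a}"
    using \<open>b a < 1\<close> by (auto simp: supp_def b'_def)
  show "b = mix (b a) (point_bet a) b'"
    using \<open>b a < 1\<close> by (auto simp: fun_eq_iff mix_def point_bet_def b'_def)
  have "(\<Sum>c\<in>supp b'. b' c) = (\<Sum>c\<in>supp b - {a}. b c) / (1 - b a)"
    unfolding supp' by (simp add: b'_def sum_divide_distrib)
  also have "\<dots> = 1"
    using b fin a \<open>b a < 1\<close> by (simp add: bet_def sum.remove)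
  finally have sum1: "(\<Sum>c\<in>supp b'. b' c) = 1" .
  have nonneg: "0 \<le> b' c" for c
    using rng[of c] \<open>b a < 1\<close> by (simp add: b'_def)
  have "b' c \<le> 1" for c
  proof (cases "c \<in> supp b'")
    case True
    then show ?thesis
      using member_le_sum[of c "supp b'" b'] nonneg fin supp' sum1 by simp
  qed (simp add: supp_def)
  then show "bet b'"
    using nonneg sum1 fin supp' by (simp add: bet_def)
qed

lemma bet_induct [consumes 1, case_names point mix]:
  assumes "bet b"
    and point: "\<And>a. P (point_bet a)"
    and mix: "\<And>a p b'. bet b' \<Longrightarrow> P b' \<Longrightarrow> 0 < p \<Longrightarrow> p < 1 \<Longrightarrow> P (mix p (point_bet a) b')"
  shows "P b"
  using \<open>bet b\<close>
proof (induction "card (supp b)" arbitrary: b rule: less_induct)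
  case less
  have fin: "finite (supp b)" and rng: "\<And>c. 0 \<le> b c \<and> b c \<le> 1"
    using less.prems by (auto simp: bet_def)
  obtain a where a: "a \<in> supp b"
    using less.prems by (force simp: bet_def)
  then have "0 < b a" using rng[of a] by (simp add: supp_def order_le_less)
  show ?case
  proof (cases "b a = 1")
    case True
    then show ?thesis using bet_eq_point_bet[OF less.prems True] point by simp
  next
    case False
    then have "b a < 1" using rng[of a] by simp
    then obtain b' where b': "bet b'" "supp b' = supp b - {a}" "b = mix (b a) (point_bet a) b'"
      using bet_decompose[OF less.prems a] by blast
    have "card (supp b') < card (supp b)"
      unfolding b'(2) using fin a by (rule card_Diff1_less)
    then have "P b'" using less.hyps b'(1) by blast
    then show ?thesis using mix b' \<open>0 < b a\<close> \<open>b a < 1\<close> by metis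
  qed
qed

lemma expected_bounds:
  assumes "bet b" "\<And>a. 0 \<le> u a \<and> u a \<le> 1"
  shows "0 \<le> expected u b \<and> expected u b \<le> 1"
  using assms(1)
proof (induction rule: bet_induct)
  case (mix a p b')
  then show ?case
    using assms(2)[of a] by (simp add: expected_mix bet_point_bet convex_bound_le)
qed (use assms(2) in simp)

section \<open>Expected-utility representations\<close>

definition eu_represents :: "'p pref \<Rightarrow> ('p form \<Rightarrow> real) \<Rightarrow> bool" where
  "eu_represents R u \<longleftrightarrow>
     (\<forall>b b'. bet b \<longrightarrow> bet b' \<longrightarrow> (R b b' \<longleftrightarrow> expected u b' \<le> expected u b))"

definition formula_likelihood :: "'p \<Rightarrow> 'p \<Rightarrow> ('p form \<Rightarrow> real) \<Rightarrow> bool" where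
  "formula_likelihood Tv Fv u \<longleftrightarrow> u (Var Tv) = 1 \<and> u (Var Fv) = 0 \<and>
     (\<forall>a c. entails Tv Fv a c \<longrightarrow> u a \<le> u c)"

lemma represents_iff_eu_represents: "represents R t lam \<longleftrightarrow> eu_represents R (\<lambda>a. lam (t a))"
  by (simp add: represents_def eu_represents_def)

lemma entails_Var_T: "entails Tv Fv a (Var Tv)"
  and entails_Var_F: "entails Tv Fv (Var Fv) a"
  by (auto simp: entails_def)

lemma formula_likelihood_bounds:
  assumes "formula_likelihood Tv Fv u"
  shows "0 \<le> u a \<and> u a \<le> 1"
  using assms entails_Var_T[of Tv Fv a] entails_Var_F[of Tv Fv a]
  by (fastforce simp: formula_likelihood_def)

lemma objective_EU_if_eu_represents:
  fixes R :: "'p pref"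
  assumes rep: "eu_represents R u"
  shows "objective_EU R"
proof -
  have R: "R b b' \<longleftrightarrow> expected u b' \<le> expected u b" if "bet b" "bet b'" for b b'
    using rep that by (simp add: eu_represents_def)
  then have strict: "strict R b b' \<longleftrightarrow> expected u b' < expected u b" if "bet b" "bet b'" for b b'
    using that by (auto simp: strict_def)
  have "independence_pref R"
    unfolding independence_pref_def
    by (auto simp: R bet_mix expected_mix)
  moreover have "archimedean_pref R"
    unfolding archimedean_pref_def
  proof (intro allI impI)
    fix x y z :: "'p form \<Rightarrow> real"
    assume bets: "bet x" "bet y" "bet z" and "strict R x y" "strict R y z"
    then have lt: "expected u z < expected u y" "expected u y < expected u x"
      by (simp_all add: strict)
    define d where "d = expected u x - expected u z"
    have em: "expected u (mix \<gamma> x z) = expected u z + \<gamma> * d" for \<gamma>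
      by (simp add: expected_mix[OF bets(1,3)] d_def algebra_simps)
    \<comment> \<open>y has the expected utility of the r-mixture; weights on either side of r separate\<close>
    define r where "r = (expected u y - expected u z) / d"
    have d: "0 < d" and r: "0 < r" "r < 1" and rd: "expected u y = expected u z + r * d"
      using lt by (auto simp: r_def d_def field_simps)
    have "r * d < (1 + r) / 2 * d" "r / 2 * d < r * d"
      using r d by (simp_all add: field_simps)
    then have "strict R (mix ((1 + r) / 2) x z) y" "strict R y (mix (r / 2) x z)"
      using r bets by (simp_all add: strict bet_mix em rd)
    then show "\<exists>\<alpha> \<beta>. 0 < \<alpha> \<and> \<alpha> < 1 \<and> 0 < \<beta> \<and> \<beta> < 1 \<and>
        strict R (mix \<alpha> x z) y \<and> strict R y (mix \<beta> x z)"
      using r by (intro exI[of _ "(1 + r) / 2"] exI[of _ "r / 2"]) auto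
  qed
  ultimately show ?thesis
    by (auto simp: objective_EU_def complete_pref_def transitive_pref_def R)
qed

lemma axioms_if_eu_represents:
  assumes u: "formula_likelihood Tv Fv u" and rep: "eu_represents R u"
  shows "non_triviality Tv Fv R \<and> objective_EU R \<and> implication_axiom Tv Fv R"
proof -
  have R: "R (point_bet a) (point_bet c) \<longleftrightarrow> u c \<le> u a" for a c
    using rep by (simp add: eu_represents_def bet_point_bet)
  show ?thesis
    using objective_EU_if_eu_represents[OF rep] formula_likelihood_bounds[OF u] u
    by (auto simp: non_triviality_def implication_axiom_def strict_def formula_likelihood_def R)
qed

section \<open>The von Neumann-Morgenstern utility\<close>

locale vnm_preference =
  fixes R :: "'p pref" and Tv Fv :: 'p
  assumes non_triviality: "non_triviality Tv Fv R" and objective_EU: "objective_EU R"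
begin

abbreviation "bT \<equiv> point_bet (Var Tv)"
abbreviation "bF \<equiv> point_bet (Var Fv)"
abbreviation "lottery \<alpha> \<equiv> mix \<alpha> bT bF"
abbreviation "indiff x y \<equiv> R x y \<and> R y x"

lemma pref_complete: "bet x \<Longrightarrow> bet y \<Longrightarrow> R x y \<or> R y x"
  using objective_EU by (auto simp: objective_EU_def complete_pref_def)

lemma pref_trans: "bet x \<Longrightarrow> bet y \<Longrightarrow> bet z \<Longrightarrow> R x y \<Longrightarrow> R y z \<Longrightarrow> R x z"
  using objective_EU unfolding objective_EU_def transitive_pref_def by blast

lemma pref_refl: "bet x \<Longrightarrow> R x x"
  using pref_complete by blast

lemma independence: "bet x \<Longrightarrow> bet y \<Longrightarrow> bet z \<Longrightarrow> 0 < \<alpha> \<Longrightarrow> \<alpha> < 1 \<Longrightarrow>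
    R x y \<longleftrightarrow> R (mix \<alpha> x z) (mix \<alpha> y z)"
  using objective_EU unfolding objective_EU_def independence_pref_def by blast

lemma archimedean: "bet x \<Longrightarrow> bet y \<Longrightarrow> bet z \<Longrightarrow> strict R x y \<Longrightarrow> strict R y z \<Longrightarrow>
    \<exists>\<alpha> \<beta>. 0 < \<alpha> \<and> \<alpha> < 1 \<and> 0 < \<beta> \<and> \<beta> < 1 \<and>
      strict R (mix \<alpha> x z) y \<and> strict R y (mix \<beta> x z)"
  using objective_EU unfolding objective_EU_def archimedean_pref_def by blast

lemma strict_T_F: "strict R bT bF"
  and T_pref: "R bT (point_bet a)" and pref_F: "R (point_bet a) bF"
  using non_triviality by (auto simp: non_triviality_def)

lemma indiff_trans: "bet x \<Longrightarrow> bet y \<Longrightarrow> bet z \<Longrightarrow> indiff x y \<Longrightarrow> indiff y z \<Longrightarrow> indiff x z"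
  using pref_trans by blast

lemma bet_lottery: "0 \<le> \<alpha> \<Longrightarrow> \<alpha> \<le> 1 \<Longrightarrow> bet (lottery \<alpha>)"
  by (simp add: bet_mix bet_point_bet)

lemma indiff_mix_left:
  assumes "bet x" "bet y" "bet z" "indiff x y" "0 < p" "p < 1"
  shows "indiff (mix p x z) (mix p y z)"
  using assms independence[of x y z p] independence[of y x z p] by blast

lemma indiff_mix_right:
  assumes "bet x" "bet y" "bet z" "indiff x y" "0 < p" "p < 1"
  shows "indiff (mix p z x) (mix p z y)"
  using indiff_mix_left[of x y z "1 - p"] assms by (simp add: mix_commute[of p z])

lemma strict_lottery_F:
  assumes "0 < \<alpha>" "\<alpha> \<le> 1"
  shows "strict R (lottery \<alpha>) bF"
proof (cases "\<alpha> = 1")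
  case False
  then show ?thesis
    using assms strict_T_F independence[of bT bF bF \<alpha>] independence[of bF bT bF \<alpha>]
    by (simp add: strict_def bet_point_bet)
qed (use strict_T_F in simp)

lemma strict_lottery_lottery:
  assumes "0 \<le> \<beta>" "\<beta> < \<alpha>" "\<alpha> \<le> 1"
  shows "strict R (lottery \<alpha>) (lottery \<beta>)"
proof -
  \<comment> \<open>lottery \<beta> is lottery \<alpha> diluted with bF\<close>
  define \<gamma> where "\<gamma> = 1 - \<beta> / \<alpha>"
  have \<gamma>: "0 < \<gamma>" "\<gamma> \<le> 1" using assms by (auto simp: \<gamma>_def field_simps)
  have "lottery \<beta> = mix \<gamma> bF (lottery \<alpha>)"
    using mix_mix[of "1 - \<gamma>" \<alpha> bT bF 0] assms by (simp add: mix_commute[of _ bF] \<gamma>_def)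
  moreover have "strict R (lottery \<alpha>) bF" using strict_lottery_F assms by simp
  ultimately show ?thesis
    using \<gamma> independence[of "lottery \<alpha>" bF "lottery \<alpha>" \<gamma>] independence[of bF "lottery \<alpha>" "lottery \<alpha>" \<gamma>]
      bet_lottery[of \<alpha>] assms
    by (cases "\<gamma> = 1") (auto simp: strict_def bet_point_bet)
qed

lemma lottery_pref_iff:
  assumes "0 \<le> \<alpha>" "\<alpha> \<le> 1" "0 \<le> \<beta>" "\<beta> \<le> 1"
  shows "R (lottery \<alpha>) (lottery \<beta>) \<longleftrightarrow> \<beta> \<le> \<alpha>"
  using strict_lottery_lottery[of \<beta> \<alpha>] strict_lottery_lottery[of \<alpha> \<beta>] pref_refl[OF bet_lottery[of \<alpha>]] assms
  by (cases \<alpha> \<beta> rule: linorder_cases) (auto simp: strict_def)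

definition calibration :: "('p form \<Rightarrow> real) \<Rightarrow> real" where
  "calibration b = Sup {\<gamma>. 0 \<le> \<gamma> \<and> \<gamma> \<le> 1 \<and> R b (lottery \<gamma>)}"

lemma calibration_upper: "0 \<le> \<gamma> \<Longrightarrow> \<gamma> \<le> 1 \<Longrightarrow> R b (lottery \<gamma>) \<Longrightarrow> \<gamma> \<le> calibration b"
  unfolding calibration_def by (rule cSup_upper) (auto intro: bdd_aboveI[of _ 1])

lemma calibration_least:
  assumes "R b bF" "\<And>\<gamma>. 0 \<le> \<gamma> \<Longrightarrow> \<gamma> \<le> 1 \<Longrightarrow> R b (lottery \<gamma>) \<Longrightarrow> \<gamma> \<le> x"
  shows "calibration b \<le> x"
proof -
  have "0 \<in> {\<gamma>. 0 \<le> \<gamma> \<and> \<gamma> \<le> 1 \<and> R b (lottery \<gamma>)}" using assms(1) by simp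
  then show ?thesis
    unfolding calibration_def by (rule cSup_least[OF ex_in_conv[THEN iffD1, OF exI]]) (use assms(2) in auto)
qed

lemma calibration_bounds: "R b bF \<Longrightarrow> 0 \<le> calibration b \<and> calibration b \<le> 1"
  using calibration_upper[of 0 b] calibration_least[of b 1] by simp

lemma not_strict_lottery_calibration:
  assumes b: "bet b" and bF: "strict R b bF"
  shows "\<not> strict R (lottery (calibration b)) b"
proof
  define \<alpha> where "\<alpha> = calibration b"
  assume h: "strict R (lottery \<alpha>) b"
  have \<alpha>: "0 \<le> \<alpha>" "\<alpha> \<le> 1"
    using calibration_bounds[of b] bF unfolding \<alpha>_def strict_def by blast+
  have "\<alpha> \<noteq> 0"
  proof
    assume "\<alpha> = 0"
    then show False using h bF by (simp add: strict_def)
  qed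
  obtain p where p: "0 < p" "p < 1" "strict R (mix p (lottery \<alpha>) bF) b"
    using archimedean[OF bet_lottery[OF \<alpha>] b bet_point_bet h bF] by blast
  have p\<alpha>: "0 \<le> p * \<alpha>" "p * \<alpha> \<le> 1" using p \<alpha> by (simp_all add: mult_le_one)
  have shrink: "mix p (lottery \<alpha>) bF = lottery (p * \<alpha>)"
    using mix_mix[of p \<alpha> bT bF 0] by simp
  have bound: "\<gamma> \<le> p * \<alpha>" if \<gamma>: "0 \<le> \<gamma>" "\<gamma> \<le> 1" and "R b (lottery \<gamma>)" for \<gamma>
  proof (rule ccontr)
    assume "\<not> \<gamma> \<le> p * \<alpha>"
    then have "R (lottery \<gamma>) (lottery (p * \<alpha>))"
      using lottery_pref_iff[OF \<gamma> p\<alpha>] by simp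
    then have "R b (lottery (p * \<alpha>))"
      using pref_trans[OF b bet_lottery[OF \<gamma>] bet_lottery[OF p\<alpha>]] \<open>R b (lottery \<gamma>)\<close> by blast
    then show False using p(3) unfolding shrink strict_def by blast
  qed
  have "\<alpha> \<le> p * \<alpha>"
    using calibration_least[of b, OF _ bound] bF unfolding \<alpha>_def strict_def by blast
  then show False using \<open>\<alpha> \<noteq> 0\<close> \<alpha> p by (simp add: mult_le_cancel_right1)
qed

lemma not_strict_calibration_lottery:
  assumes b: "bet b" and T: "strict R bT b" and F: "R b bF"
  shows "\<not> strict R b (lottery (calibration b))"
proof
  define \<alpha> where "\<alpha> = calibration b"
  assume h: "strict R b (lottery \<alpha>)"
  have \<alpha>: "0 \<le> \<alpha>" "\<alpha> \<le> 1" using calibration_bounds[OF F] unfolding \<alpha>_def by blast+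
  have "\<alpha> \<noteq> 1"
  proof
    assume "\<alpha> = 1"
    then show False using h T by (simp add: strict_def)
  qed
  obtain p where p: "0 < p" "p < 1" "strict R b (mix p bT (lottery \<alpha>))"
    using archimedean[OF bet_point_bet b bet_lottery[OF \<alpha>] T h] by blast
  define \<gamma> where "\<gamma> = p + (1 - p) * \<alpha>"
  have enlarge: "mix p bT (lottery \<alpha>) = lottery \<gamma>"
    using mix_mix[of p 1 bT bF \<alpha>] by (simp add: \<gamma>_def)
  have "0 \<le> (1 - p) * \<alpha>" "(1 - p) * \<alpha> \<le> 1 - p" using p \<alpha> by (simp_all add: mult_left_le)
  then have "0 \<le> \<gamma>" "\<gamma> \<le> 1" using p unfolding \<gamma>_def by linarith+
  moreover have "R b (lottery \<gamma>)" using p(3) unfolding enlarge strict_def by blast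
  ultimately have "\<gamma> \<le> \<alpha>" unfolding \<alpha>_def by (rule calibration_upper)
  moreover have "\<gamma> - \<alpha> = p * (1 - \<alpha>)" by (simp add: \<gamma>_def algebra_simps)
  moreover have "0 < p * (1 - \<alpha>)" using p \<alpha> \<open>\<alpha> \<noteq> 1\<close> by simp
  ultimately show False by linarith
qed

lemma exists_indiff_lottery: "\<exists>\<alpha>. 0 \<le> \<alpha> \<and> \<alpha> \<le> 1 \<and> indiff (point_bet a) (lottery \<alpha>)"
proof -
  consider (worst) "R bF (point_bet a)" | (best) "R (point_bet a) bT"
    | (between) "strict R (point_bet a) bF" "strict R bT (point_bet a)"
    using T_pref[of a] pref_F[of a] unfolding strict_def by blast
  then show ?thesis
  proof cases
    case worst
    then show ?thesis using pref_F[of a] by (intro exI[of _ 0]) simp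
  next
    case best
    then show ?thesis using T_pref[of a] by (intro exI[of _ 1]) simp
  next
    case between
    define \<alpha> where "\<alpha> = calibration (point_bet a)"
    have \<alpha>: "0 \<le> \<alpha>" "\<alpha> \<le> 1" using calibration_bounds[OF pref_F] unfolding \<alpha>_def by blast+
    have "indiff (point_bet a) (lottery \<alpha>)"
      using not_strict_lottery_calibration[OF bet_point_bet between(1)]
        not_strict_calibration_lottery[OF bet_point_bet between(2) pref_F]
        pref_complete[OF bet_point_bet bet_lottery[OF \<alpha>]]
      unfolding \<alpha>_def strict_def by blast
    then show ?thesis using \<alpha> by blast
  qed
qed

definition utility :: "'p form \<Rightarrow> real" where
  "utility a = (SOME \<alpha>. 0 \<le> \<alpha> \<and> \<alpha> \<le> 1 \<and> indiff (point_bet a) (lottery \<alpha>))"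

lemma utility: "0 \<le> utility a \<and> utility a \<le> 1 \<and> indiff (point_bet a) (lottery (utility a))"
  unfolding utility_def by (rule someI_ex) (rule exists_indiff_lottery)

lemma indiff_lottery_expected_utility:
  assumes "bet b"
  shows "indiff b (lottery (expected utility b))"
  using assms
proof (induction rule: bet_induct)
  case (point a)
  then show ?case using utility[of a] by simp
next
  case (mix a p b')
  let ?u = "utility a" and ?e = "expected utility b'"
  have u: "0 \<le> ?u" "?u \<le> 1" and e: "0 \<le> ?e" "?e \<le> 1"
    using utility[of a] expected_bounds[OF mix.hyps(1)] utility by auto
  have p: "0 < p" "p < 1" by (fact mix.hyps)+
  have indiff_point: "indiff (mix p (point_bet a) b') (mix p (lottery ?u) b')"
    using indiff_mix_left[OF bet_point_bet bet_lottery[OF u] mix.hyps(1) _ p] utility[of a] by blast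
  have indiff_rest: "indiff (mix p (lottery ?u) b') (mix p (lottery ?u) (lottery ?e))"
    using indiff_mix_right[OF mix.hyps(1) bet_lottery[OF e] bet_lottery[OF u] mix.IH p] .
  have "mix p (lottery ?u) (lottery ?e) = lottery (expected utility (mix p (point_bet a) b'))"
    by (simp add: mix_mix expected_mix[OF bet_point_bet mix.hyps(1)])
  moreover have "bet (mix p (point_bet a) b')" "bet (mix p (lottery ?u) b')"
    "bet (mix p (lottery ?u) (lottery ?e))"
    using p by (simp_all add: bet_mix bet_point_bet bet_lottery u e mix.hyps(1))
  ultimately show ?case
    using indiff_trans[OF _ _ _ indiff_point indiff_rest] by simp
qed


lemma eu_represents_utility: "eu_represents R utility"
  unfolding eu_represents_def
proof (intro allI impI)
  fix b b' :: "'p form \<Rightarrow> real"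
  assume b: "bet b" and b': "bet b'"
  let ?e = "expected utility b" and ?e' = "expected utility b'"
  have e: "0 \<le> ?e" "?e \<le> 1" "0 \<le> ?e'" "?e' \<le> 1"
    using expected_bounds[OF b] expected_bounds[OF b'] utility by auto
  have "R b b' \<longleftrightarrow> R (lottery ?e) (lottery ?e')"
    using pref_trans[OF b bet_lottery bet_lottery] pref_trans[OF b bet_lottery b'] pref_trans[OF bet_lottery b b']
      pref_trans[OF bet_lottery b' bet_lottery] indiff_lottery_expected_utility[OF b]
      indiff_lottery_expected_utility[OF b'] e
    by meson
  also have "\<dots> \<longleftrightarrow> ?e' \<le> ?e" using lottery_pref_iff e by blast
  finally show "R b b' \<longleftrightarrow> ?e' \<le> ?e" .
qed

lemma utility_T: "utility (Var Tv) = 1"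
  using utility[of "Var Tv"] lottery_pref_iff[of "utility (Var Tv)" 1] by simp

lemma utility_F: "utility (Var Fv) = 0"
  using utility[of "Var Fv"] lottery_pref_iff[of 0 "utility (Var Fv)"] by simp

end

theorem axioms_iff_eu_represents:
  fixes R :: "'p pref"
  shows "non_triviality Tv Fv R \<and> objective_EU R \<and> implication_axiom Tv Fv R
    \<longleftrightarrow> (\<exists>u. formula_likelihood Tv Fv u \<and> eu_represents R u)"
proof
  assume axioms: "non_triviality Tv Fv R \<and> objective_EU R \<and> implication_axiom Tv Fv R"
  then interpret vnm_preference R Tv Fv by unfold_locales blast+
  have "utility a \<le> utility c" if "entails Tv Fv a c" for a c
    using axioms that eu_represents_utility
    by (simp add: implication_axiom_def eu_represents_def bet_point_bet)
  then have "formula_likelihood Tv Fv utility"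
    by (simp add: formula_likelihood_def utility_T utility_F)
  then show "\<exists>u. formula_likelihood Tv Fv u \<and> eu_represents R u"
    using eu_represents_utility by blast
next
  assume "\<exists>u. formula_likelihood Tv Fv u \<and> eu_represents R u"
  then show "non_triviality Tv Fv R \<and> objective_EU R \<and> implication_axiom Tv Fv R"
    using axioms_if_eu_represents[of Tv Fv _ R] by blast
qed

section \<open>Subjective models\<close>

lemma monotone_la_if_additive:
  assumes "likelihood_appraisal \<Omega> \<Sigma> lam" "additive_la \<Sigma> lam"
  shows "monotone_la \<Sigma> lam"
  unfolding monotone_la_def
proof (intro ballI impI)
  fix A B assume A: "A \<in> \<Sigma>" and B: "B \<in> \<Sigma>" and "A \<subseteq> B"
  have alg: "algebra \<Omega> \<Sigma>" and nonneg: "\<forall>C\<in>\<Sigma>. 0 \<le> lam C"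
    using assms(1) by (auto simp: likelihood_appraisal_def)
  have diff: "B - A \<in> \<Sigma>" using alg A B by (meson algebra.axioms ring_of_sets.Diff)
  have "lam B = lam (A \<union> (B - A))" using \<open>A \<subseteq> B\<close> by (simp add: Un_absorb1)
  also have "\<dots> = lam A + lam (B - A)"
    using assms(2) A diff unfolding additive_la_def by blast
  finally show "lam A \<le> lam B" using nonneg diff by simp
qed

lemma formula_likelihood_if_monotone_model:
  assumes model: "subjective_model Tv Fv \<Omega> t \<Sigma> lam"
    and lam: "monotone_la \<Sigma> lam" and t: "monotone_tv Tv Fv t"
  shows "formula_likelihood Tv Fv (\<lambda>a. lam (t a))"
proof -
  have "t a \<in> \<Sigma>" for a using model by (auto simp: subjective_model_def)
  then have "lam (t a) \<le> lam (t c)" if "entails Tv Fv a c" for a c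
    using lam t that by (simp add: monotone_la_def monotone_tv_def)
  then show ?thesis
    using model by (auto simp: formula_likelihood_def subjective_model_def truth_valuation_def
        likelihood_appraisal_def)
qed

lemma lebesgue_model:
  assumes u: "formula_likelihood Tv Fv u"
  shows "\<exists>(\<Omega>::real set) t \<Sigma> lam. subjective_model Tv Fv \<Omega> t \<Sigma> lam \<and> (\<lambda>a. lam (t a)) = u
    \<and> additive_la \<Sigma> lam \<and> monotone_tv Tv Fv t"
proof (intro exI conjI)
  define \<Omega> :: "real set" where "\<Omega> = {0..<1}"
  define t where "t a = {0..<u a}" for a
  define \<Sigma> where "\<Sigma> = sets (restrict_space lborel \<Omega>)"
  define lam where "lam = measure (lborel :: real measure)"
  have u01: "0 \<le> u a \<and> u a \<le> 1" for a using formula_likelihood_bounds[OF u] .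
  have \<Sigma>: "A \<in> \<Sigma> \<longleftrightarrow> A \<subseteq> \<Omega> \<and> A \<in> sets lborel" for A
    unfolding \<Sigma>_def by (rule sets_restrict_space_iff) (simp add: \<Omega>_def)
  have finite: "A \<in> \<Sigma> \<Longrightarrow> A \<in> fmeasurable lborel" for A
    using fmeasurableI2[OF fmeasurable_cbox[of 0 "1::real"], of A] \<Sigma> by (force simp: \<Omega>_def)
  have "algebra \<Omega> \<Sigma>"
    using sigma_algebra.axioms(1)[OF sets.sigma_algebra_axioms[of "restrict_space lborel \<Omega>"]]
    unfolding \<Sigma>_def by (simp add: space_restrict_space \<Omega>_def)
  moreover have "0 \<le> lam A \<and> lam A \<le> 1" if "A \<in> \<Sigma>" for A
    using measure_mono_fmeasurable[of A \<Omega> lborel] that \<Sigma> finite by (auto simp: lam_def \<Omega>_def)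
  ultimately have "likelihood_appraisal \<Omega> \<Sigma> lam"
    by (simp add: likelihood_appraisal_def lam_def \<Omega>_def)
  moreover have "truth_valuation Tv Fv \<Omega> t" "range t \<subseteq> \<Sigma>"
    using u u01 by (auto simp: truth_valuation_def formula_likelihood_def t_def \<Omega>_def \<Sigma>)
  ultimately show "subjective_model Tv Fv \<Omega> t \<Sigma> lam"
    by (simp add: subjective_model_def)
  show "(\<lambda>a. lam (t a)) = u" using u01 by (simp add: fun_eq_iff lam_def t_def)
  show "additive_la \<Sigma> lam"
    unfolding additive_la_def lam_def by (auto intro!: measure_Union dest!: finite simp: fmeasurable_def)
  show "monotone_tv Tv Fv t"
    using u by (auto simp: monotone_tv_def formula_likelihood_def t_def)
qed

lemma valuation_model:
  fixes u :: "'p form \<Rightarrow> real"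
  assumes u: "formula_likelihood Tv Fv u"
  shows "\<exists>(\<Omega>::('p \<Rightarrow> bool) set) t \<Sigma> lam. subjective_model Tv Fv \<Omega> t \<Sigma> lam \<and> (\<lambda>a. lam (t a)) = u
    \<and> monotone_la \<Sigma> lam \<and> sound_tv Tv Fv \<Omega> t"
proof (intro exI conjI)
  define \<Omega> :: "('p \<Rightarrow> bool) set" where "\<Omega> = {v. v Tv \<and> \<not> v Fv}"
  define t where "t a = {v \<in> \<Omega>. eval v a}" for a
  define lam where "lam A = Sup {u a | a. t a \<subseteq> A}" for A
  have u01: "0 \<le> u a \<and> u a \<le> 1" for a using formula_likelihood_bounds[OF u] .
  have entails: "entails Tv Fv a c \<longleftrightarrow> t a \<subseteq> t c" for a c
    unfolding entails_def t_def \<Omega>_def by blast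
  have tT: "t (Var Tv) = \<Omega>" and tF: "t (Var Fv) = {}" by (auto simp: t_def \<Omega>_def)
  have nonempty: "{u a | a. t a \<subseteq> A} \<noteq> {}" for A using tF by blast
  have bounded: "bdd_above {u a | a. t a \<subseteq> A}" for A using u01 by (auto intro: bdd_aboveI[of _ 1])
  show lam_t: "(\<lambda>a. lam (t a)) = u"
    using u entails unfolding fun_eq_iff lam_def formula_likelihood_def
    by (intro allI cSup_eq_maximum) auto
  have mono: "lam A \<le> lam B" if "A \<subseteq> B" for A B
    unfolding lam_def by (rule cSup_subset_mono[OF nonempty bounded]) (use that in blast)
  then show "monotone_la (Pow \<Omega>) lam" by (simp add: monotone_la_def)
  have "lam \<Omega> = 1" "lam {} = 0"
    using lam_t u tT tF by (auto simp: fun_eq_iff formula_likelihood_def dest: spec[of _ "Var Tv"] spec[of _ "Var Fv"])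
  then have "likelihood_appraisal \<Omega> (Pow \<Omega>) lam"
    using mono[of "{}"] mono[of _ \<Omega>] algebra_Pow by (auto simp: likelihood_appraisal_def)
  moreover have "truth_valuation Tv Fv \<Omega> t" "range t \<subseteq> Pow \<Omega>"
    using tT tF by (auto simp: truth_valuation_def t_def)
  ultimately show "subjective_model Tv Fv \<Omega> t (Pow \<Omega>) lam"
    by (simp add: subjective_model_def)
  show "sound_tv Tv Fv \<Omega> t"
    unfolding sound_tv_def exact_tv_def monotone_tv_def symmetric_tv_def conj_distributive_tv_def
      equiv_form_def entails
    by (auto simp: t_def)
qed

theorem proposition3:
  fixes R :: "'p pref" and Tv Fv :: 'p
  shows
   "(non_triviality Tv Fv R \<and> objective_EU R \<and> implication_axiom Tv Fv R
       \<longleftrightarrow> (\<exists>(\<Omega>::real set) t \<Sigma> lam. subjective_model Tv Fv \<Omega> t \<Sigma> lam \<and> represents R t lam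
              \<and> additive_la \<Sigma> lam \<and> monotone_tv Tv Fv t))
  \<and> (non_triviality Tv Fv R \<and> objective_EU R \<and> implication_axiom Tv Fv R
       \<longleftrightarrow> (\<exists>(\<Omega>::('p \<Rightarrow> bool) set) t \<Sigma> lam. subjective_model Tv Fv \<Omega> t \<Sigma> lam \<and> represents R t lam
              \<and> monotone_la \<Sigma> lam \<and> sound_tv Tv Fv \<Omega> t))
  \<and> ((\<exists>(\<Omega>::'w set) t \<Sigma> lam. subjective_model Tv Fv \<Omega> t \<Sigma> lam \<and> represents R t lam
              \<and> additive_la \<Sigma> lam \<and> monotone_tv Tv Fv t)
       \<longrightarrow> non_triviality Tv Fv R \<and> objective_EU R \<and> implication_axiom Tv Fv R)
  \<and> ((\<exists>(\<Omega>::'v set) t \<Sigma> lam. subjective_model Tv Fv \<Omega> t \<Sigma> lam \<and> represents R t lam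
              \<and> monotone_la \<Sigma> lam \<and> sound_tv Tv Fv \<Omega> t)
       \<longrightarrow> non_triviality Tv Fv R \<and> objective_EU R \<and> implication_axiom Tv Fv R)"
proof -
  let ?axioms = "non_triviality Tv Fv R \<and> objective_EU R \<and> implication_axiom Tv Fv R"
  have additive: "?axioms"
    if "subjective_model Tv Fv \<Omega> t \<Sigma> lam" "represents R t lam" "additive_la \<Sigma> lam" "monotone_tv Tv Fv t"
    for \<Omega> :: "'x set" and t \<Sigma> lam
    using that formula_likelihood_if_monotone_model monotone_la_if_additive axioms_iff_eu_represents
    by (metis represents_iff_eu_represents subjective_model_def)
  have sound: "?axioms"
    if "subjective_model Tv Fv \<Omega> t \<Sigma> lam" "represents R t lam" "monotone_la \<Sigma> lam" "sound_tv Tv Fv \<Omega> t"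
    for \<Omega> :: "'x set" and t \<Sigma> lam
    using that formula_likelihood_if_monotone_model axioms_iff_eu_represents
    by (metis represents_iff_eu_represents sound_tv_def)
  have "?axioms \<longleftrightarrow> (\<exists>u. formula_likelihood Tv Fv u \<and> eu_represents R u)"
    by (rule axioms_iff_eu_represents)
  then show ?thesis
    using lebesgue_model[of Tv Fv] valuation_model[of Tv Fv] additive sound
    by (metis represents_iff_eu_represents)
qed

end
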